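(* Let $N\ge 1$ and let $\phi: H_0(S_N)\to M_N$ be the quotient morphism of monoids sending $\pi_i\mapsto\pi_i$, where $M_N$ is the quotient of $H_0(S_N)$ by the additional relations $\pi_i\pi_{i+1}\pi_i=\pi_i\pi_{i+1}$ for $1\le i\le N-2$. For every $m\in M_N$, consider the fiber $F_m=\{w\in S_N:\ \phi(\pi_w)=m\}$. Every nonempty fiber $F_m$ contains a unique $[321]$-avoiding permutation, and it is of minimal length among the elements of $F_m$; and $F_m$ contains a unique $[231]$-avoiding permutation, and it is of maximal length among the elements of $F_m$.
   Context: $S_N$ is the symmetric group generated by the simple transpositions $s_1,\dots,s_{N-1}$. Permutations are written in one-line notation $x=[x(1),\dots,x(N)]$ and composed as functions, $(uv)(j)=u(v(j))$, so $xs_i$ is obtained from $x$ by swapping the entries in positions $i,i+1$. The length $\operatorname{len}(x)$ is the length of a reduced (minimal-length) word for $x$ in the $s_i$, i.e. the number of inversions. The $0$-Hecke monoid $H_0(S_N)$ is generated by $\pi_1,\dots,\pi_{N-1}$ with relations $\pi_i^2=\pi_i$, $\pi_i\pi_j=\pi_j\pi_i$ for $|i-j|\ge2$, $\pi_i\pi_{i+1}\pi_i=\pi_{i+1}\pi_i\pi_{i+1}$; its elements are $\pi_w:=\pi_{i_1}\cdots\pi_{i_k}$ for $w\in S_N$, where $w=s_{i_1}\cdots s_{i_k}$ is any reduced word, and $w\mapsto \pi_w$ is a bijection. A permutation $x$ contains a pattern $\sigma\in S_k$ if some subsequence $x(i_1),\dots,x(i_k)$ with $i_1<\dots<i_k$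 is in the same relative order as $\sigma(1),\dots,\sigma(k)$; otherwise $x$ avoids $\sigma$. The monoid $M_N$ is isomorphic to the monoid $\operatorname{NDPF}_N$ of order-preserving, regressive ($f(x)\le x$) maps of $\{1,\dots,N\}$, with $\pi_i$ the map sending $i+1\mapsto i$ and fixing all other points. *)

theory Defs
  imports "HOL-Combinatorics.Combinatorics"
begin

(* Permutations of {1..N} are functions nat => nat that permute {1..N}.
   Composition is function composition: (u o v) j = u (v j). *)

definition perms :: "nat \<Rightarrow> (nat \<Rightarrow> nat) set" where
  "perms N = {x. x permutes {1..N}}"

definition s :: "nat \<Rightarrow> nat \<Rightarrow> nat" where
  "s i = Transposition.transpose i (Suc i)"

definition words :: "nat \<Rightarrow> nat list set" where
  "words N = {ws. set ws \<subseteq> {1..<N}}"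

definition perm_of_word :: "nat list \<Rightarrow> nat \<Rightarrow> nat" where
  "perm_of_word ws = foldr (\<lambda>i f. s i \<circ> f) ws id"

definition len :: "nat \<Rightarrow> (nat \<Rightarrow> nat) \<Rightarrow> nat" where
  "len N x = card {(i, j). 1 \<le> i \<and> i < j \<and> j \<le> N \<and> x i > x j}"

definition reduced_word :: "nat \<Rightarrow> (nat \<Rightarrow> nat) \<Rightarrow> nat list \<Rightarrow> bool" where
  "reduced_word N w ws \<longleftrightarrow> ws \<in> words N \<and> perm_of_word ws = w \<and> length ws = len N w"

(* defining relations of M_N: those of H_0(S_N) plus pi_i pi_{i+1} pi_i = pi_i pi_{i+1} *)
definition rels :: "nat \<Rightarrow> (nat list \<times> nat list) set" where
  "rels N =
     {([i, i], [i]) | i. 1 \<le> i \<and> i < N}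
   \<union> {([i, j], [j, i]) | i j. 1 \<le> i \<and> i < N \<and> 1 \<le> j \<and> j < N \<and> (i + 2 \<le> j \<or> j + 2 \<le> i)}
   \<union> {([i, Suc i, i], [Suc i, i, Suc i]) | i. 1 \<le> i \<and> Suc i < N}
   \<union> {([i, Suc i, i], [i, Suc i]) | i. 1 \<le> i \<and> Suc i < N}"

definition step :: "nat \<Rightarrow> (nat list \<times> nat list) set" where
  "step N = {(u @ l @ v, u @ r @ v) | u l r v. (l, r) \<in> rels N \<or> (r, l) \<in> rels N}"

definition cong :: "nat \<Rightarrow> (nat list \<times> nat list) set" where
  "cong N = (step N)\<^sup>*"

definition monoidM :: "nat \<Rightarrow> nat list set set" where
  "monoidM N = words N // cong N"

(* fiber F_m = {w in S_N. phi(pi_w) = m}; phi(pi_w) is the class of any reduced word of w *)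
definition fiber :: "nat \<Rightarrow> nat list set \<Rightarrow> (nat \<Rightarrow> nat) set" where
  "fiber N m = {w \<in> perms N. \<exists>ws. reduced_word N w ws \<and> ws \<in> m}"

(* pattern containment; pattern sigma in S_k given in one-line notation as a list *)
definition contains :: "nat \<Rightarrow> (nat \<Rightarrow> nat) \<Rightarrow> nat list \<Rightarrow> bool" where
  "contains N x \<sigma> \<longleftrightarrow> (\<exists>idx :: nat \<Rightarrow> nat.
      (\<forall>a < length \<sigma>. 1 \<le> idx a \<and> idx a \<le> N) \<and>
      (\<forall>a b. a < b \<and> b < length \<sigma> \<longrightarrow> idx a < idx b) \<and>
      (\<forall>a < length \<sigma>. \<forall>b < length \<sigma>. x (idx a) < x (idx b) \<longleftrightarrow> \<sigma> ! a < \<sigma> ! b))"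

definition avoids :: "nat \<Rightarrow> (nat \<Rightarrow> nat) \<Rightarrow> nat list \<Rightarrow> bool" where
  "avoids N x \<sigma> \<longleftrightarrow> \<not> contains N x \<sigma>"

end

theory Submission
  imports Defs
begin

text \<open>
  Reading a word letter by letter as the maps \<open>\<pi>\<^sub>i\<close> (\<open>i+1 \<mapsto> i\<close>) of \<open>NDPF\<^sub>N\<close>
  realises \<open>M\<^sub>N\<close> faithfully: equivalent words give the same map, and every word is
  equivalent to a canonical word determined by its map. For a reduced word of \<open>w\<close> this
  map is \<open>j \<mapsto> min {w(j), \<dots>, w(N)}\<close>, so a fibre is a class of permutations with the
  same suffix minima. Swapping the values in positions \<open>a < b\<close> that both exceed a later
  value stays inside the class; this destroys a 321 pattern (lowering the length) and
  undoes a 231 pattern (raising it), so length-minimal elements avoid 321 and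
  length-maximal ones avoid 231. Conversely, at the last position where two members of a
  class differ, the one with the smaller value there contains 321 and the other 231.
\<close>

section \<open>Faithfulness of the action of \<open>M\<^sub>N\<close> on \<open>{1..N}\<close>\<close>

definition ndpf_gen :: "nat \<Rightarrow> nat \<Rightarrow> nat" where
  "ndpf_gen i = (\<lambda>x. if x = Suc i then i else x)"

definition ndpf_of_word :: "nat list \<Rightarrow> nat \<Rightarrow> nat" where
  "ndpf_of_word ws = foldr (\<lambda>i f. ndpf_gen i \<circ> f) ws id"

lemma ndpf_of_word_Nil [simp]: "ndpf_of_word [] = id"
  by (simp add: ndpf_of_word_def)

lemma ndpf_of_word_Cons [simp]: "ndpf_of_word (i # ws) = ndpf_gen i \<circ> ndpf_of_word ws"
  by (simp add: ndpf_of_word_def)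

lemma ndpf_of_word_append: "ndpf_of_word (xs @ ys) = ndpf_of_word xs \<circ> ndpf_of_word ys"
  by (induction xs) auto

lemma cong_imp_ndpf_eq:
  assumes "(a, b) \<in> cong N"
  shows "ndpf_of_word a = ndpf_of_word b"
proof -
  have rels: "ndpf_of_word l = ndpf_of_word r" if "(l, r) \<in> rels N" for l r
    using that unfolding rels_def by (auto simp: ndpf_gen_def fun_eq_iff)
  have step: "ndpf_of_word a = ndpf_of_word b" if "(a, b) \<in> step N" for a b
    using that rels unfolding step_def by (force simp: ndpf_of_word_append)
  show ?thesis
    using assms unfolding cong_def by (induction rule: rtrancl_induct) (auto dest: step)
qed

definition word_cong :: "nat \<Rightarrow> nat list \<Rightarrow> nat list \<Rightarrow> bool" where
  "word_cong N a b \<longleftrightarrow> (a, b) \<in> cong N"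

lemma word_cong_refl [simp]: "word_cong N a a"
  by (simp add: word_cong_def cong_def)

lemma word_cong_sym:
  assumes "word_cong N a b"
  shows "word_cong N b a"
proof -
  have step: "(b, a) \<in> step N" if "(a, b) \<in> step N" for a b
    using that unfolding step_def by blast
  show ?thesis
    using assms unfolding word_cong_def cong_def
    by (induction rule: rtrancl_induct) (auto intro: converse_rtrancl_into_rtrancl step)
qed

lemma word_cong_trans [trans]: "word_cong N a b \<Longrightarrow> word_cong N b c \<Longrightarrow> word_cong N a c"
  unfolding word_cong_def cong_def by (rule rtrancl_trans)

lemma word_cong_append:
  assumes "word_cong N a b"
  shows "word_cong N (u @ a @ v) (u @ b @ v)"
proof -
  have step: "(u @ a @ v, u @ b @ v) \<in> step N" if "(a, b) \<in> step N" for a b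
    using that unfolding step_def by auto (metis append.assoc)+
  show ?thesis
    using assms unfolding word_cong_def cong_def
    by (induction rule: rtrancl_induct) (auto intro: rtrancl_into_rtrancl step)
qed

lemma word_cong_append_left: "word_cong N a b \<Longrightarrow> word_cong N (u @ a) (u @ b)"
  using word_cong_append[of N a b u "[]"] by simp

lemma word_cong_append_right: "word_cong N a b \<Longrightarrow> word_cong N (a @ v) (b @ v)"
  using word_cong_append[of N a b "[]" v] by simp

lemma word_cong_of_rel:
  assumes "(l, r) \<in> rels N"
  shows "word_cong N l r"
proof -
  have "([] @ l @ [], [] @ r @ []) \<in> step N"
    using assms unfolding step_def by blast
  then show ?thesis
    unfolding word_cong_def cong_def by auto
qed

lemma word_cong_idem: "1 \<le> i \<Longrightarrow> i < N \<Longrightarrow> word_cong N [i, i] [i]"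
  by (rule word_cong_of_rel) (auto simp: rels_def)

definition far_apart :: "nat \<Rightarrow> nat \<Rightarrow> nat \<Rightarrow> bool" where
  "far_apart N i j \<longleftrightarrow> 1 \<le> i \<and> i < N \<and> 1 \<le> j \<and> j < N \<and> (i + 2 \<le> j \<or> j + 2 \<le> i)"

lemma word_cong_swap: "far_apart N i j \<Longrightarrow> word_cong N [i, j] [j, i]"
  by (rule word_cong_of_rel) (auto simp: rels_def far_apart_def)

lemma word_cong_braid: "1 \<le> i \<Longrightarrow> Suc i < N \<Longrightarrow> word_cong N [i, Suc i, i] [i, Suc i]"
  by (rule word_cong_of_rel) (auto simp: rels_def)

lemma word_cong_braid': "1 \<le> i \<Longrightarrow> Suc i < N \<Longrightarrow> word_cong N [Suc i, i, Suc i] [i, Suc i]"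
proof -
  assume i: "1 \<le> i" "Suc i < N"
  have "word_cong N [Suc i, i, Suc i] [i, Suc i, i]"
    using i by (auto simp: rels_def intro!: word_cong_sym[OF word_cong_of_rel])
  also have "word_cong N \<dots> [i, Suc i]"
    using i by (rule word_cong_braid)
  finally show ?thesis .
qed

lemma word_cong_commute_letter:
  "\<forall>x\<in>set ws. far_apart N j x \<Longrightarrow> word_cong N (ws @ [j]) (j # ws)"
proof (induction ws)
  case (Cons x ws)
  have "word_cong N ([x] @ ws @ [j]) ([x] @ [j] @ ws)"
    using Cons by (intro word_cong_append_left) simp
  also have "\<dots> = [x, j] @ ws" by simp
  also have "word_cong N ([x, j] @ ws) ([j, x] @ ws)"
    using Cons.prems by (intro word_cong_append_right word_cong_swap) (auto simp: far_apart_def)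
  finally show ?case by simp
qed simp

lemma word_cong_commute:
  "\<forall>x\<in>set ws. \<forall>y\<in>set vs. far_apart N y x \<Longrightarrow> word_cong N (ws @ vs) (vs @ ws)"
proof (induction vs arbitrary: ws)
  case (Cons y vs)
  have "word_cong N ((ws @ [y]) @ vs) ((y # ws) @ vs)"
    using Cons.prems by (intro word_cong_append_right word_cong_commute_letter) simp
  also have "\<dots> = [y] @ ws @ vs" by simp
  also have "word_cong N ([y] @ ws @ vs) ([y] @ vs @ ws)"
    using Cons by (intro word_cong_append_left) simp
  finally show ?case by simp
qed simp

lemma word_cong_upt_absorb_letter:
  "1 \<le> a \<Longrightarrow> a \<le> j \<Longrightarrow> j < b \<Longrightarrow> b \<le> N \<Longrightarrow> word_cong N ([a..<b] @ [j]) [a..<b]"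
proof (induction b)
  case (Suc b)
  then have upt_b: "[a..<Suc b] = [a..<b] @ [b]" by simp
  consider "j = b" | "Suc j = b" | "Suc j < b"
    using Suc.prems by linarith
  then show ?case
  proof cases
    case 1
    then show ?thesis
      using word_cong_append_left[OF word_cong_idem[of b N], of "[a..<b]"] Suc.prems upt_b by simp
  next
    case 2
    then have "[a..<b] = [a..<j] @ [j]" using Suc.prems by auto
    then show ?thesis
      using word_cong_append_left[OF word_cong_braid[of j N], of "[a..<j]"] Suc.prems upt_b 2 by simp
  next
    case 3
    have "word_cong N ([a..<b] @ [b, j]) ([a..<b] @ [j, b])"
      using 3 Suc.prems by (intro word_cong_append_left word_cong_swap) (simp add: far_apart_def)
    also have "\<dots> = ([a..<b] @ [j]) @ [b]" by simp
    also have "word_cong N (([a..<b] @ [j]) @ [b]) ([a..<b] @ [b])"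
      using 3 Suc by (intro word_cong_append_right) simp
    finally show ?thesis using upt_b by simp
  qed
qed simp

lemma word_cong_upt_absorb:
  "1 \<le> a \<Longrightarrow> b \<le> N \<Longrightarrow> set vs \<subseteq> {a..<b} \<Longrightarrow> word_cong N ([a..<b] @ vs) [a..<b]"
proof (induction vs rule: rev_induct)
  case (snoc x vs)
  have "word_cong N (([a..<b] @ vs) @ [x]) ([a..<b] @ [x])"
    using snoc by (intro word_cong_append_right) auto
  also have "word_cong N \<dots> [a..<b]"
    using snoc by (intro word_cong_upt_absorb_letter) auto
  finally show ?case by simp
qed simp

lemma word_cong_upt_sandwich:
  "1 \<le> a \<Longrightarrow> a < b \<Longrightarrow> b \<le> N \<Longrightarrow> word_cong N ([Suc a..<b] @ a # [Suc a..<b]) [a..<b]"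
proof (induction b)
  case (Suc b)
  consider "b = a" | "b = Suc a" | "Suc a < b"
    using Suc.prems by linarith
  then show ?case
  proof cases
    case 2
    then show ?thesis using word_cong_braid'[of a N] Suc.prems by simp
  next
    case 3
    define Y where "Y = [Suc a..<b - 1]"
    have upt_b: "[Suc a..<b] = Y @ [b - 1]"
      using 3 unfolding Y_def by (cases b) auto
    have "\<forall>x\<in>set (a # Y). far_apart N b x"
      using 3 Suc.prems unfolding Y_def far_apart_def by auto
    then have "word_cong N ((a # Y) @ [b]) (b # a # Y)"
      by (rule word_cong_commute_letter)
    then have "word_cong N ([b] @ (a # Y)) ((a # Y) @ [b])"
      using word_cong_sym by simp
    then have "word_cong N ((Y @ [b - 1]) @ ([b] @ (a # Y)) @ [b - 1, b])
        ((Y @ [b - 1]) @ ((a # Y) @ [b]) @ [b - 1, b])"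
      by (rule word_cong_append)
    also have "\<dots> = (Y @ [b - 1] @ a # Y) @ [Suc (b - 1), b - 1, Suc (b - 1)]"
      using 3 by simp
    also have "word_cong N \<dots> ((Y @ [b - 1] @ a # Y) @ [b - 1, Suc (b - 1)])"
      using 3 Suc.prems by (intro word_cong_append_left word_cong_braid') auto
    also have "\<dots> = ([Suc a..<b] @ a # [Suc a..<b]) @ [b]"
      using 3 upt_b by simp
    also have "word_cong N \<dots> ([a..<b] @ [b])"
      using 3 Suc by (intro word_cong_append_right) simp
    finally show ?thesis
      using 3 upt_b by simp
  qed simp
qed simp

lemma word_cong_upt_upt:
  assumes "1 \<le> k'" "k' \<le> k" "k \<le> n" "n \<le> N"
  shows "word_cong N ([k..<n] @ [k'..<n]) [k'..<n]"
proof (cases "k' = k")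
  case True
  then show ?thesis using assms by (simp add: word_cong_upt_absorb)
next
  case False
  then have "[k'..<n] = [k'..<k - 1] @ [k - 1..<n]"
    using assms upt_add_eq_append[of k' "k - 1" "n - (k - 1)"] by simp
  then have split: "[k'..<n] = [k'..<k - 1] @ (k - 1) # [k..<n]"
    using False assms by (simp add: upt_conv_Cons)
  have "\<forall>x\<in>set [k..<n]. \<forall>y\<in>set [k'..<k - 1]. far_apart N y x"
    using assms unfolding far_apart_def by auto
  then have "word_cong N ([k..<n] @ [k'..<k - 1]) ([k'..<k - 1] @ [k..<n])"
    by (rule word_cong_commute)
  then have "word_cong N (([k..<n] @ [k'..<k - 1]) @ (k - 1) # [k..<n])
      (([k'..<k - 1] @ [k..<n]) @ (k - 1) # [k..<n])"
    by (rule word_cong_append_right)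
  also have "\<dots> = [k'..<k - 1] @ ([Suc (k - 1)..<n] @ (k - 1) # [Suc (k - 1)..<n])"
    using False assms by simp
  also have "word_cong N \<dots> ([k'..<k - 1] @ [k - 1..<n])"
    using False assms by (intro word_cong_append_left word_cong_upt_sandwich) auto
  also have "\<dots> = [k'..<n]"
    using split False assms by (simp add: upt_conv_Cons)
  finally show ?thesis
    using split by simp
qed

definition is_ndpf :: "nat \<Rightarrow> (nat \<Rightarrow> nat) \<Rightarrow> bool" where
  "is_ndpf n f \<longleftrightarrow> (\<forall>j. 1 \<le> j \<and> j \<le> n \<longrightarrow> 1 \<le> f j \<and> f j \<le> j)
     \<and> (\<forall>a b. 1 \<le> a \<and> a \<le> b \<and> b \<le> n \<longrightarrow> f a \<le> f b)"

lemma is_ndpf_mono: "is_ndpf n f \<Longrightarrow> m \<le> n \<Longrightarrow> is_ndpf m f"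
  unfolding is_ndpf_def by auto

lemma is_ndpf_gen_comp: "1 \<le> i \<Longrightarrow> is_ndpf n f \<Longrightarrow> is_ndpf n (ndpf_gen i \<circ> f)"
  unfolding is_ndpf_def ndpf_gen_def by (auto simp: le_Suc_eq) (metis Suc_leD le_Suc_eq)+

lemma is_ndpf_ndpf_of_word: "ws \<in> words N \<Longrightarrow> is_ndpf N (ndpf_of_word ws)"
proof (induction ws)
  case Nil
  then show ?case by (simp add: is_ndpf_def)
next
  case (Cons i ws)
  then show ?case
    unfolding ndpf_of_word_Cons by (intro is_ndpf_gen_comp) (auto simp: words_def)
qed

text \<open>\<open>[f n..<n]\<close> is \<open>\<pi>\<^bsub>f n\<^esub> \<cdots> \<pi>\<^bsub>n-1\<^esub>\<close>, which moves \<open>n\<close> down to \<open>f n\<close>.\<close>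

fun canonical_word :: "(nat \<Rightarrow> nat) \<Rightarrow> nat \<Rightarrow> nat list" where
  "canonical_word f 0 = []"
| "canonical_word f (Suc n) = [f (Suc n)..<Suc n] @ canonical_word f n"

lemma set_canonical_word: "is_ndpf n f \<Longrightarrow> set (canonical_word f n) \<subseteq> {1..<n}"
proof (induction n)
  case (Suc n)
  have "is_ndpf n f"
    using Suc.prems by (rule is_ndpf_mono) simp
  then have "set (canonical_word f n) \<subseteq> {1..<n}"
    by (rule Suc.IH)
  moreover have "1 \<le> f (Suc n)"
    using Suc.prems by (simp add: is_ndpf_def)
  ultimately show ?case by auto
qed simp

lemma canonical_word_cong: "(\<forall>j\<in>{1..n}. f j = g j) \<Longrightarrow> canonical_word f n = canonical_word g n"
  by (induction n) auto

lemma word_cong_canonical_word_snoc: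
  "is_ndpf n f \<Longrightarrow> n \<le> N \<Longrightarrow> 1 \<le> i \<Longrightarrow> i < n
    \<Longrightarrow> word_cong N (canonical_word f n @ [i]) (canonical_word (f \<circ> ndpf_gen i) n)"
proof (induction n)
  case (Suc n)
  have ndpf_n: "is_ndpf n f"
    using Suc.prems(1) by (rule is_ndpf_mono) simp
  show ?case
  proof (cases "i < n")
    case True
    have "word_cong N (canonical_word f n @ [i]) (canonical_word (f \<circ> ndpf_gen i) n)"
      using Suc.prems True by (intro Suc.IH[OF ndpf_n]) auto
    then have "word_cong N ([f (Suc n)..<Suc n] @ canonical_word f n @ [i])
        ([f (Suc n)..<Suc n] @ canonical_word (f \<circ> ndpf_gen i) n)"
      by (rule word_cong_append_left)
    moreover have "(f \<circ> ndpf_gen i) (Suc n) = f (Suc n)"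
      using True by (simp add: ndpf_gen_def)
    ultimately show ?thesis
      by (simp only: canonical_word.simps append_assoc)
  next
    case False
    then have i: "i = n" using Suc.prems by simp
    then obtain p where p: "n = Suc p" using Suc.prems by (cases n) auto
    have f: "1 \<le> f n" "f n \<le> n" "f n \<le> f (Suc n)" "f (Suc n) \<le> Suc n"
      using Suc.prems i unfolding is_ndpf_def by auto
    have "is_ndpf p f"
      using ndpf_n by (rule is_ndpf_mono) (simp add: p)
    then have "set (canonical_word f p) \<subseteq> {1..<p}"
      by (rule set_canonical_word)
    then have "\<forall>x\<in>set (canonical_word f p). far_apart N n x"
      using Suc.prems i p unfolding far_apart_def by auto
    then have commute: "word_cong N (canonical_word f p @ [n]) (n # canonical_word f p)"
      by (rule word_cong_commute_letter)
    have gen_top: "(f \<circ> ndpf_gen i) (Suc n) = f n"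
      using i by (simp add: ndpf_gen_def)
    have gen_below: "canonical_word (f \<circ> ndpf_gen i) n = canonical_word f n"
      using i by (intro canonical_word_cong) (simp add: ndpf_gen_def)
    have "canonical_word f (Suc n) @ [i]
        = ([f (Suc n)..<Suc n] @ [f n..<n]) @ canonical_word f p @ [n]"
      using p i by simp
    also have "word_cong N \<dots> (([f (Suc n)..<Suc n] @ [f n..<n]) @ n # canonical_word f p)"
      using commute by (rule word_cong_append_left)
    also have "\<dots> = ([f (Suc n)..<Suc n] @ [f n..<Suc n]) @ canonical_word f p"
      using f by simp
    also have "word_cong N \<dots> ([f n..<Suc n] @ canonical_word f p)"
      using f Suc.prems by (intro word_cong_append_right word_cong_upt_upt) auto
    also have "word_cong N \<dots> (([f n..<Suc n] @ [f n..<n]) @ canonical_word f p)"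
      using f Suc.prems
      by (intro word_cong_append_right word_cong_sym[OF word_cong_upt_absorb]) auto
    also have "\<dots> = canonical_word (f \<circ> ndpf_gen i) (Suc n)"
      unfolding canonical_word.simps gen_top gen_below by (simp add: p)
    finally show ?thesis .
  qed
qed simp

lemma word_cong_canonical_word:
  "ws \<in> words N \<Longrightarrow> word_cong N ws (canonical_word (ndpf_of_word ws) N)"
proof (induction ws rule: rev_induct)
  case Nil
  have "canonical_word (\<lambda>x. x) n = []" for n by (induction n) auto
  then show ?case by simp
next
  case (snoc i ws)
  then have ws: "ws \<in> words N" and i: "1 \<le> i" "i < N" by (auto simp: words_def)
  have "word_cong N (ws @ [i]) (canonical_word (ndpf_of_word ws) N @ [i])"
    using snoc.IH ws by (intro word_cong_append_right) simp
  also have "word_cong N \<dots> (canonical_word (ndpf_of_word ws \<circ> ndpf_gen i) N)"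
    using is_ndpf_ndpf_of_word[OF ws] i by (intro word_cong_canonical_word_snoc) auto
  finally show ?case
    by (simp only: ndpf_of_word_append ndpf_of_word_Cons ndpf_of_word_Nil comp_id)
qed

theorem word_cong_iff_ndpf_eq:
  assumes "ws \<in> words N" "vs \<in> words N"
  shows "word_cong N ws vs \<longleftrightarrow> (\<forall>j\<in>{1..N}. ndpf_of_word ws j = ndpf_of_word vs j)"
proof
  show "word_cong N ws vs \<Longrightarrow> \<forall>j\<in>{1..N}. ndpf_of_word ws j = ndpf_of_word vs j"
    by (simp add: word_cong_def cong_imp_ndpf_eq)
next
  assume "\<forall>j\<in>{1..N}. ndpf_of_word ws j = ndpf_of_word vs j"
  then have "canonical_word (ndpf_of_word ws) N = canonical_word (ndpf_of_word vs) N"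
    by (rule canonical_word_cong)
  then show "word_cong N ws vs"
    using word_cong_canonical_word[OF assms(1)] word_cong_canonical_word[OF assms(2)]
    by (metis word_cong_sym word_cong_trans)
qed

section \<open>Reduced words and suffix minima\<close>

lemma s_apply: "s i a = (if a = i then Suc i else if a = Suc i then i else a)"
  by (simp add: s_def Transposition.transpose_def)

lemma comp_s_s [simp]: "x \<circ> s i \<circ> s i = x"
  by (simp add: s_def comp_assoc)

lemma s_permutes: "1 \<le> i \<Longrightarrow> Suc i \<le> N \<Longrightarrow> s i permutes {1..N}"
  unfolding s_def by (rule permutes_swap_id) auto

lemma perm_of_word_append: "perm_of_word (xs @ ys) = perm_of_word xs \<circ> perm_of_word ys"
  by (induction xs) (auto simp: perm_of_word_def)

lemma perm_of_word_Nil [simp]: "perm_of_word [] = id"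
  by (simp add: perm_of_word_def)

lemma perm_of_word_Cons: "perm_of_word (i # ws) = s i \<circ> perm_of_word ws"
  by (simp add: perm_of_word_def)

lemma perm_of_word_snoc: "perm_of_word (xs @ [i]) = perm_of_word xs \<circ> s i"
  by (simp add: perm_of_word_append perm_of_word_Cons)

lemma perm_of_word_permutes: "ws \<in> words N \<Longrightarrow> perm_of_word ws permutes {1..N}"
proof (induction ws)
  case (Cons i ws)
  have "s i permutes {1..N}"
    using Cons.prems by (intro s_permutes) (auto simp: words_def)
  moreover have "perm_of_word ws permutes {1..N}"
    using Cons by (simp add: words_def)
  ultimately show ?case
    unfolding perm_of_word_Cons by (rule permutes_compose[rotated])
qed (simp add: permutes_id)

definition inversions :: "nat \<Rightarrow> (nat \<Rightarrow> nat) \<Rightarrow> (nat \<times> nat) set" where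
  "inversions N x = {(a, b). 1 \<le> a \<and> a < b \<and> b \<le> N \<and> x b < x a}"

lemma len_eq_card_inversions: "len N x = card (inversions N x)"
  by (simp add: len_def inversions_def)

lemma finite_inversions: "finite (inversions N x)"
  by (rule finite_subset[of _ "{1..N} \<times> {1..N}"]) (auto simp: inversions_def)

lemma len_id: "len N id = 0"
proof -
  have "inversions N id = {}"
    by (auto simp: inversions_def)
  then show ?thesis
    by (simp only: len_eq_card_inversions card.empty)
qed

lemma inversions_comp_s:
  assumes "x i < x (Suc i)" "1 \<le> i" "Suc i \<le> N"
  shows "inversions N (x \<circ> s i) = insert (i, Suc i) (map_prod (s i) (s i) ` inversions N x)"
proof (intro equalityI subsetI)
  fix p assume p: "p \<in> inversions N (x \<circ> s i)"
  then obtain c d where cd: "p = (c, d)" by (cases p)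
  show "p \<in> insert (i, Suc i) (map_prod (s i) (s i) ` inversions N x)"
  proof (cases "p = (i, Suc i)")
    case False
    then have "(s i c, s i d) \<in> inversions N x"
      using p assms unfolding cd by (auto simp: inversions_def s_apply split: if_splits)
    moreover have "p = map_prod (s i) (s i) (s i c, s i d)"
      by (simp add: cd s_apply)
    ultimately show ?thesis by blast
  qed simp
next
  fix p assume "p \<in> insert (i, Suc i) (map_prod (s i) (s i) ` inversions N x)"
  then consider "p = (i, Suc i)" | a b where "(a, b) \<in> inversions N x" "p = (s i a, s i b)"
    by auto
  then show "p \<in> inversions N (x \<circ> s i)"
  proof cases
    case 2
    then show ?thesis using assms by (auto simp: inversions_def s_apply)
  qed (use assms in \<open>simp add: inversions_def s_apply\<close>)
qed

lemma len_comp_s: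
  assumes "x i < x (Suc i)" "1 \<le> i" "Suc i \<le> N"
  shows "len N (x \<circ> s i) = Suc (len N x)"
proof -
  have "inj (map_prod (s i) (s i))"
    by (rule prod.inj_map) (simp_all add: s_def inj_transpose)
  then have "inj_on (map_prod (s i) (s i)) (inversions N x)"
    by (rule inj_on_subset) simp
  moreover have "(i, Suc i) \<notin> map_prod (s i) (s i) ` inversions N x"
    by (auto simp: inversions_def s_apply split: if_splits)
  ultimately show ?thesis
    unfolding len_eq_card_inversions inversions_comp_s[OF assms]
    by (simp add: card_image finite_inversions)
qed

lemma len_comp_s_le:
  assumes "inj x" "1 \<le> i" "Suc i \<le> N"
  shows "len N (x \<circ> s i) \<le> Suc (len N x)"
proof (cases "x i < x (Suc i)")
  case True
  then show ?thesis using len_comp_s assms by simp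
next
  case False
  moreover have "x i \<noteq> x (Suc i)"
    using assms(1) by (metis injD n_not_Suc_n)
  ultimately have "(x \<circ> s i) i < (x \<circ> s i) (Suc i)"
    by (simp add: s_apply)
  then have "len N x = Suc (len N (x \<circ> s i))"
    using len_comp_s[of "x \<circ> s i" i N] assms by simp
  then show ?thesis by simp
qed

lemma len_perm_of_word_le: "ws \<in> words N \<Longrightarrow> len N (perm_of_word ws) \<le> length ws"
proof (induction ws rule: rev_induct)
  case Nil
  show ?case
    unfolding perm_of_word_Nil len_id by simp
next
  case (snoc i ws)
  then have ws: "ws \<in> words N" and i: "1 \<le> i" "Suc i \<le> N"
    by (auto simp: words_def)
  have "inj (perm_of_word ws)"
    using perm_of_word_permutes[OF ws] by (rule permutes_inj)
  then have "len N (perm_of_word ws \<circ> s i) \<le> Suc (len N (perm_of_word ws))"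
    using i by (rule len_comp_s_le)
  then show ?case
    using snoc.IH ws unfolding perm_of_word_snoc length_append_singleton by linarith
qed

lemma reduced_word_snocD:
  assumes "reduced_word N w (us @ [i])"
  shows "reduced_word N (perm_of_word us) us" and "perm_of_word us i < perm_of_word us (Suc i)"
proof -
  let ?u = "perm_of_word us"
  have us: "us \<in> words N" and i: "1 \<le> i" "Suc i \<le> N"
    using assms by (auto simp: reduced_word_def words_def)
  have w: "w = ?u \<circ> s i" and len_w: "len N w = Suc (length us)"
    using assms by (simp_all add: reduced_word_def perm_of_word_snoc)
  have len_u: "len N ?u \<le> length us"
    using us by (rule len_perm_of_word_le)
  show ascent: "?u i < ?u (Suc i)"
  proof (rule ccontr)
    assume "\<not> ?u i < ?u (Suc i)"
    moreover have "?u i \<noteq> ?u (Suc i)"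
      using permutes_inj[OF perm_of_word_permutes[OF us]] by (metis injD n_not_Suc_n)
    ultimately have "w i < w (Suc i)"
      unfolding w by (simp add: s_apply)
    then have "len N (w \<circ> s i) = Suc (len N w)"
      using i by (rule len_comp_s)
    then have "len N ?u = Suc (len N w)"
      unfolding w by simp
    then show False
      using len_w len_u by simp
  qed
  have "len N ?u = length us"
    using len_comp_s[OF ascent i] w len_w by simp
  then show "reduced_word N ?u us"
    using us by (simp add: reduced_word_def)
qed

definition suffix_min :: "nat \<Rightarrow> (nat \<Rightarrow> nat) \<Rightarrow> nat \<Rightarrow> nat" where
  "suffix_min N w j = Min (w ` {j..N})"

lemma Min_image_eqI:
  fixes u v :: "'a \<Rightarrow> 'b::linorder"
  assumes "finite A" "finite B" "A \<noteq> {}" "B \<noteq> {}"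
    and "\<forall>a\<in>A. \<exists>b\<in>B. v b \<le> u a" and "\<forall>b\<in>B. \<exists>a\<in>A. u a \<le> v b"
  shows "Min (u ` A) = Min (v ` B)"
proof (rule antisym)
  have "Min (u ` A) \<in> u ` A" "Min (v ` B) \<in> v ` B"
    using assms by (auto intro!: Min_in)
  then obtain a b where a: "a \<in> A" "Min (u ` A) = u a" and b: "b \<in> B" "Min (v ` B) = v b"
    by blast
  show "Min (u ` A) \<le> Min (v ` B)"
    using assms(1,6) b by (metis Min_le finite_imageI image_eqI order_trans)
  show "Min (v ` B) \<le> Min (u ` A)"
    using assms(2,5) a by (metis Min_le finite_imageI image_eqI order_trans)
qed

lemma suffix_min_attained: "j \<le> N \<Longrightarrow> \<exists>k\<in>{j..N}. suffix_min N w j = w k"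
proof -
  assume "j \<le> N"
  then have "Min (w ` {j..N}) \<in> w ` {j..N}"
    by (intro Min_in) auto
  then show ?thesis
    unfolding suffix_min_def by blast
qed

lemma suffix_min_comp_s:
  assumes "u i < u (Suc i)" "1 \<le> i" "Suc i \<le> N" "j \<le> N"
  shows "suffix_min N (u \<circ> s i) j = suffix_min N u (ndpf_gen i j)"
proof (cases "j = Suc i")
  case True
  have "Min ((u \<circ> s i) ` {Suc i..N}) = Min (u ` {i..N})"
  proof (rule Min_image_eqI)
    show "\<forall>k\<in>{Suc i..N}. \<exists>k'\<in>{i..N}. u k' \<le> (u \<circ> s i) k"
      using assms by (auto simp: s_apply intro: bexI[of _ "s i k" for k])
    show "\<forall>k\<in>{i..N}. \<exists>k'\<in>{Suc i..N}. (u \<circ> s i) k' \<le> u k"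
    proof
      fix k assume "k \<in> {i..N}"
      then show "\<exists>k'\<in>{Suc i..N}. (u \<circ> s i) k' \<le> u k"
        using assms
        by (intro bexI[of _ "if k = i \<or> k = Suc i then Suc i else k"]) (auto simp: s_apply)
    qed
  qed (use assms in auto)
  then show ?thesis
    using True by (simp add: suffix_min_def ndpf_gen_def)
next
  case False
  have s_closed: "s i k \<in> {j..N}" if "k \<in> {j..N}" for k
    using that assms False by (auto simp: s_apply)
  have "Min ((u \<circ> s i) ` {j..N}) = Min (u ` {j..N})"
  proof (rule Min_image_eqI)
    show "\<forall>k\<in>{j..N}. \<exists>k'\<in>{j..N}. u k' \<le> (u \<circ> s i) k"
      using s_closed by auto
    show "\<forall>k\<in>{j..N}. \<exists>k'\<in>{j..N}. (u \<circ> s i) k' \<le> u k"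
      using s_closed by (metis comp_apply comp_s_s order_refl)
  qed (use assms in auto)
  then show ?thesis
    using False by (simp add: suffix_min_def ndpf_gen_def)
qed

lemma ndpf_of_reduced_word:
  "reduced_word N w ws \<Longrightarrow> j \<le> N \<Longrightarrow> ndpf_of_word ws j = suffix_min N w j"
proof (induction ws arbitrary: w j rule: rev_induct)
  case Nil
  then have "w = id" by (simp add: reduced_word_def)
  moreover have "Min {j..N} = j" using Nil.prems(2) by (intro Min_eqI) auto
  ultimately show ?case by (simp add: suffix_min_def)
next
  case (snoc i us)
  let ?u = "perm_of_word us"
  have i: "1 \<le> i" "Suc i \<le> N" and w: "w = ?u \<circ> s i"
    using snoc.prems by (auto simp: reduced_word_def words_def perm_of_word_snoc)
  have "ndpf_of_word (us @ [i]) j = ndpf_of_word us (ndpf_gen i j)"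
    by (simp add: ndpf_of_word_append)
  also have "\<dots> = suffix_min N ?u (ndpf_gen i j)"
    using snoc.prems reduced_word_snocD(1) by (intro snoc.IH) (auto simp: ndpf_gen_def)
  also have "\<dots> = suffix_min N w j"
    unfolding w using reduced_word_snocD(2)[OF snoc.prems(1)] i snoc.prems(2)
    by (rule suffix_min_comp_s[symmetric])
  finally show ?case .
qed

lemma permutes_ascending_eq_id:
  assumes "w permutes {1..N}" and "\<forall>i. 1 \<le> i \<longrightarrow> Suc i \<le> N \<longrightarrow> w i < w (Suc i)"
  shows "w = id"
proof
  fix j
  show "w j = id j"
  proof (cases "j \<in> {1..N}")
    case True
    let ?xs = "map w [1..<Suc N]"
    have "sorted_wrt (<) ?xs"
      using assms(2) by (subst sorted_wrt_iff_nth_Suc_transp) (auto simp del: upt_Suc)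
    moreover have "set ?xs = set [1..<Suc N]"
      using permutes_image[OF assms(1)]
      by (simp add: atLeastLessThanSuc_atLeastAtMost del: upt_Suc)
    ultimately have "?xs = [1..<Suc N]"
      by (intro sorted_distinct_set_unique) (auto simp: strict_sorted_iff simp del: upt_Suc)
    then have "?xs ! (j - 1) = [1..<Suc N] ! (j - 1)" by simp
    then show ?thesis using True by (auto simp: nth_map simp del: upt_Suc)
  qed (use permutes_not_in[OF assms(1)] in auto)
qed

lemma exists_reduced_word: "w permutes {1..N} \<Longrightarrow> \<exists>ws. reduced_word N w ws"
proof (induction "len N w" arbitrary: w rule: less_induct)
  case less
  show ?case
  proof (cases "\<exists>i. 1 \<le> i \<and> Suc i \<le> N \<and> w (Suc i) < w i")
    case True
    then obtain i where i: "1 \<le> i" "Suc i \<le> N" "w (Suc i) < w i" by auto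
    let ?v = "w \<circ> s i"
    have "?v permutes {1..N}"
      using s_permutes[OF i(1,2)] less.prems by (rule permutes_compose)
    moreover have len_w: "len N w = Suc (len N ?v)"
      using len_comp_s[of ?v i N] i by (simp add: s_apply)
    ultimately obtain vs where "reduced_word N ?v vs"
      using less.hyps by auto
    then have "reduced_word N w (vs @ [i])"
      using i len_w by (auto simp: reduced_word_def words_def perm_of_word_snoc)
    then show ?thesis by blast
  next
    case False
    have "\<forall>i. 1 \<le> i \<longrightarrow> Suc i \<le> N \<longrightarrow> w i < w (Suc i)"
    proof (intro allI impI)
      fix i assume "1 \<le> i" "Suc i \<le> N"
      moreover have "w i \<noteq> w (Suc i)"
        using permutes_inj[OF less.prems] by (metis injD n_not_Suc_n)
      ultimately show "w i < w (Suc i)" using False by (meson linorder_neqE_nat)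
    qed
    then have "w = id"
      using less.prems by (intro permutes_ascending_eq_id) auto
    then have "reduced_word N w []"
      by (simp add: reduced_word_def words_def len_id)
    then show ?thesis by blast
  qed
qed

definition suffix_min_class :: "nat \<Rightarrow> (nat \<Rightarrow> nat) \<Rightarrow> (nat \<Rightarrow> nat) set" where
  "suffix_min_class N w = {v \<in> perms N. \<forall>j\<in>{1..N}. suffix_min N v j = suffix_min N w j}"

lemma suffix_min_class_self: "w \<in> perms N \<Longrightarrow> w \<in> suffix_min_class N w"
  by (simp add: suffix_min_class_def)

lemma suffix_min_class_eq: "v \<in> suffix_min_class N w \<Longrightarrow> suffix_min_class N v = suffix_min_class N w"
  by (auto simp: suffix_min_class_def)

lemma finite_suffix_min_class: "finite (suffix_min_class N w)"
  by (rule finite_subset[of _ "perms N"]) (auto simp: suffix_min_class_def perms_def finite_permutations)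

theorem fiber_eq_suffix_min_class:
  assumes "m \<in> monoidM N" and "w0 \<in> fiber N m"
  shows "fiber N m = suffix_min_class N w0"
proof -
  obtain x where m: "m = cong N `` {x}"
    using assms(1) unfolding monoidM_def by (auto elim: quotientE)
  obtain ws0 where ws0: "reduced_word N w0 ws0" "ws0 \<in> m"
    using assms(2) by (auto simp: fiber_def)
  have in_m: "ws \<in> m \<longleftrightarrow> word_cong N ws0 ws" for ws
    using m ws0(2) by (metis Image_singleton_iff word_cong_def word_cong_sym word_cong_trans)
  have "ws \<in> m \<longleftrightarrow> (\<forall>j\<in>{1..N}. suffix_min N w j = suffix_min N w0 j)"
    if "reduced_word N w ws" for w ws
    using that ws0(1) unfolding in_m
    by (subst word_cong_iff_ndpf_eq) (auto simp: reduced_word_def ndpf_of_reduced_word)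
  then show ?thesis
    unfolding fiber_def suffix_min_class_def perms_def by (blast dest: exists_reduced_word)
qed

section \<open>Patterns within a class of equal suffix minima\<close>

lemma contains_length_3_iff:
  assumes "length \<sigma> = 3"
  shows "contains N w \<sigma> \<longleftrightarrow> (\<exists>a b c. 1 \<le> a \<and> a < b \<and> b < c \<and> c \<le> N \<and>
    (\<forall>i<3. \<forall>j<3. w ([a, b, c] ! i) < w ([a, b, c] ! j) \<longleftrightarrow> \<sigma> ! i < \<sigma> ! j))"
proof -
  have all3: "(\<forall>t<3. P t) \<longleftrightarrow> P 0 \<and> P 1 \<and> P 2" for P :: "nat \<Rightarrow> bool"
    by (auto simp: numeral_3_eq_3 numeral_2_eq_2 less_Suc_eq)
  have pairs3: "(\<forall>a b. a < b \<and> b < 3 \<longrightarrow> Q a b) \<longleftrightarrow> Q 0 1 \<and> Q 0 2 \<and> Q 1 2"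
    for Q :: "nat \<Rightarrow> nat \<Rightarrow> bool"
    by (auto simp: numeral_3_eq_3 numeral_2_eq_2 less_Suc_eq)
  show ?thesis
  proof
    assume "contains N w \<sigma>"
    then obtain idx :: "nat \<Rightarrow> nat" where "\<forall>t<3. 1 \<le> idx t \<and> idx t \<le> N"
      and "\<forall>a b. a < b \<and> b < 3 \<longrightarrow> idx a < idx b"
      and "\<forall>a<3. \<forall>b<3. w (idx a) < w (idx b) \<longleftrightarrow> \<sigma> ! a < \<sigma> ! b"
      using assms unfolding contains_def by auto
    then show "\<exists>a b c. 1 \<le> a \<and> a < b \<and> b < c \<and> c \<le> N \<and>
        (\<forall>i<3. \<forall>j<3. w ([a, b, c] ! i) < w ([a, b, c] ! j) \<longleftrightarrow> \<sigma> ! i < \<sigma> ! j)"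
      unfolding all3 pairs3 by (intro exI[of _ "idx 0"] exI[of _ "idx 1"] exI[of _ "idx 2"]) simp
  next
    assume "\<exists>a b c. 1 \<le> a \<and> a < b \<and> b < c \<and> c \<le> N \<and>
        (\<forall>i<3. \<forall>j<3. w ([a, b, c] ! i) < w ([a, b, c] ! j) \<longleftrightarrow> \<sigma> ! i < \<sigma> ! j)"
    then obtain a b c where "1 \<le> a" "a < b" "b < c" "c \<le> N"
      "\<forall>i<3. \<forall>j<3. w ([a, b, c] ! i) < w ([a, b, c] ! j) \<longleftrightarrow> \<sigma> ! i < \<sigma> ! j"
      by blast
    then show "contains N w \<sigma>"
      unfolding contains_def assms all3 pairs3 by (intro exI[of _ "\<lambda>t. [a, b, c] ! t"]) simp
  qed
qed

lemma contains_321_iff: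
  "contains N w [3, 2, 1] \<longleftrightarrow> (\<exists>a b c. 1 \<le> a \<and> a < b \<and> b < c \<and> c \<le> N \<and> w c < w b \<and> w b < w a)"
  by (subst contains_length_3_iff)
    (auto simp: numeral_3_eq_3 numeral_2_eq_2 less_Suc_eq intro!: ex_cong)

lemma contains_231_iff:
  "contains N w [2, 3, 1] \<longleftrightarrow> (\<exists>a b c. 1 \<le> a \<and> a < b \<and> b < c \<and> c \<le> N \<and> w c < w a \<and> w a < w b)"
  by (subst contains_length_3_iff)
    (auto simp: numeral_3_eq_3 numeral_2_eq_2 less_Suc_eq intro!: ex_cong)

lemma suffix_min_comp_transpose:
  assumes "a < b" "b < c" "c \<le> N" "w c < w a" "w c < w b" "j \<le> N"
  shows "suffix_min N (w \<circ> Transposition.transpose a b) j = suffix_min N w j"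
  unfolding suffix_min_def
proof (rule Min_image_eqI)
  let ?t = "Transposition.transpose a b"
  let ?k' = "\<lambda>k. if j \<le> a then ?t k else if k = b then c else k"
  show "\<forall>k\<in>{j..N}. \<exists>k'\<in>{j..N}. w k' \<le> (w \<circ> ?t) k"
  proof
    fix k assume "k \<in> {j..N}"
    then show "\<exists>k'\<in>{j..N}. w k' \<le> (w \<circ> ?t) k"
      using assms by (intro bexI[of _ "?k' k"]) (auto simp: transpose_def)
  qed
  show "\<forall>k\<in>{j..N}. \<exists>k'\<in>{j..N}. (w \<circ> ?t) k' \<le> w k"
  proof
    fix k assume "k \<in> {j..N}"
    then show "\<exists>k'\<in>{j..N}. (w \<circ> ?t) k' \<le> w k"
      using assms by (intro bexI[of _ "?k' k"]) (auto simp: transpose_def)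
  qed
qed (use assms in auto)

lemma len_comp_transpose_less:
  assumes "1 \<le> a" "a < b" "b \<le> N" "w b < w a"
  shows "len N (w \<circ> Transposition.transpose a b) < len N w"
proof -
  let ?t = "Transposition.transpose a b"
  txt \<open>Pairs with an entry strictly between \<open>a\<close> and \<open>b\<close> are kept, the others are moved
    by the transposition: this injects the inversions of \<open>w \<circ> ?t\<close> into those of \<open>w\<close>
    other than \<open>(a, b)\<close>.\<close>
  define \<phi> where "\<phi> = (\<lambda>(x, y). if (a < x \<and> x < b) \<or> (a < y \<and> y < b) then (x, y) else (?t x, ?t y))"
  have "\<phi> ` inversions N (w \<circ> ?t) \<subseteq> inversions N w - {(a, b)}"
    using assms unfolding \<phi>_def by (auto simp: inversions_def transpose_def split: if_splits)
  moreover have "inj_on \<phi> (inversions N (w \<circ> ?t))"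
    using assms unfolding \<phi>_def by (intro inj_onI) (auto simp: transpose_def split: if_splits)
  moreover have "(a, b) \<in> inversions N w"
    using assms by (auto simp: inversions_def)
  ultimately have "card (inversions N (w \<circ> ?t)) < card (inversions N w)"
    by (metis card_image card_Diff1_less card_mono finite_Diff finite_inversions le_less_trans)
  then show ?thesis
    by (simp add: len_eq_card_inversions)
qed

lemma last_difference:
  fixes v w :: "nat \<Rightarrow> nat"
  assumes "v permutes {1..N}" "w permutes {1..N}" "v \<noteq> w"
  obtains q where "q \<in> {1..N}" "v q \<noteq> w q" "\<forall>k\<in>{q<..N}. v k = w k"
proof -
  define D where "D = {q \<in> {1..N}. v q \<noteq> w q}"
  have "D \<noteq> {}"
  proof
    assume "D = {}"
    have "v j = w j" for j
    proof (cases "j \<in> {1..N}")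
      case True
      then show ?thesis using \<open>D = {}\<close> unfolding D_def by blast
    next
      case False
      then show ?thesis using permutes_not_in[OF assms(1)] permutes_not_in[OF assms(2)] by simp
    qed
    then have "v = w" by (rule ext)
    then show False
      using assms(3) by simp
  qed
  moreover have "finite D"
    unfolding D_def by simp
  ultimately have max_in: "Max D \<in> D" and max_ge: "\<And>k. k \<in> D \<Longrightarrow> k \<le> Max D"
    by simp_all
  show ?thesis
  proof (rule that)
    show "Max D \<in> {1..N}" "v (Max D) \<noteq> w (Max D)"
      using max_in unfolding D_def by auto
    show "\<forall>k\<in>{Max D<..N}. v k = w k"
    proof (intro ballI, rule ccontr)
      fix k assume k: "k \<in> {Max D<..N}" and "v k \<noteq> w k"
      then have "k \<in> D"
        using max_in unfolding D_def by auto
      then show False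
        using k max_ge by fastforce
    qed
  qed
qed

lemma later_smaller_at_last_difference:
  assumes "inj v" "\<forall>j\<in>{1..N}. suffix_min N v j = suffix_min N w j"
    and "q \<in> {1..N}" "v q < w q" "\<forall>k\<in>{q<..N}. v k = w k"
  shows "\<exists>z\<in>{q<..N}. v z < v q"
proof (rule ccontr)
  assume "\<not> (\<exists>z\<in>{q<..N}. v z < v q)"
  then have "\<forall>k\<in>{q..N}. v q \<le> v k"
    by (metis greaterThanAtMost_iff atLeastAtMost_iff le_less not_less)
  then have "Min (v ` {q..N}) = v q"
    using assms(3) by (intro Min_eqI) auto
  then have "suffix_min N w q = v q"
    using assms(2,3) by (simp add: suffix_min_def)
  then obtain k where k: "k \<in> {q..N}" "w k = v q"
    using suffix_min_attained[of q N w] assms(3) by auto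
  with assms(4) have "k \<in> {q<..N}"
    by (cases "k = q") auto
  with assms(5) k(2) have "v k = v q" by simp
  with \<open>k \<in> {q<..N}\<close> show False
    using injD[OF assms(1)] by fastforce
qed

lemma earlier_preimage_at_last_difference:
  fixes v w :: "nat \<Rightarrow> nat"
  assumes "v permutes {1..N}" "w permutes {1..N}"
    and "q \<in> {1..N}" "v q \<noteq> w q" "\<forall>k\<in>{q<..N}. v k = w k"
  shows "\<exists>p\<in>{1..<q}. v p = w q"
proof -
  have "w q \<in> {1..N}"
    using permutes_in_image[OF assms(2)] assms(3) by blast
  then have "w q \<in> v ` {1..N}"
    by (simp only: permutes_image[OF assms(1)])
  then obtain p where p: "p \<in> {1..N}" "v p = w q" by auto
  have "\<not> q < p"
  proof
    assume "q < p"
    then have "w p = w q" using assms(5) p by auto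
    then show False using \<open>q < p\<close> permutes_inj[OF assms(2)] by (metis injD less_irrefl)
  qed
  moreover have "p \<noteq> q" using p assms(4) by auto
  ultimately show ?thesis using p by auto
qed

lemma patterns_at_last_difference:
  assumes v: "v permutes {1..N}" and w: "w permutes {1..N}"
    and same: "\<forall>j\<in>{1..N}. suffix_min N v j = suffix_min N w j"
    and q: "q \<in> {1..N}" "v q < w q" "\<forall>k\<in>{q<..N}. v k = w k"
  shows "contains N v [3, 2, 1]" and "contains N w [2, 3, 1]"
proof -
  obtain z where z: "z \<in> {q<..N}" "v z < v q"
    using later_smaller_at_last_difference[OF permutes_inj[OF v] same q] by blast
  have "w z = v z"
    using z q(3) by simp
  have neq: "v q \<noteq> w q" "w q \<noteq> v q" and agree': "\<forall>k\<in>{q<..N}. w k = v k"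
    using q(2,3) by simp_all
  obtain p where "p \<in> {1..<q}" "v p = w q"
    using earlier_preimage_at_last_difference[OF v w q(1) neq(1) q(3)] by blast
  then have "1 \<le> p \<and> p < q \<and> q < z \<and> z \<le> N \<and> v z < v q \<and> v q < v p"
    using z q(2) by auto
  then show "contains N v [3, 2, 1]"
    unfolding contains_321_iff by blast
  obtain p' where "p' \<in> {1..<q}" "w p' = v q"
    using earlier_preimage_at_last_difference[OF w v q(1) neq(2) agree'] by blast
  then have "1 \<le> p' \<and> p' < q \<and> q < z \<and> z \<le> N \<and> w z < w p' \<and> w p' < w q"
    using z q(2) \<open>w z = v z\<close> by auto
  then show "contains N w [2, 3, 1]"
    unfolding contains_231_iff by blast
qed

lemma suffix_min_class_patterns:
  assumes w: "w \<in> perms N" and v: "v \<in> suffix_min_class N w" and "v \<noteq> w"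
  shows "contains N v [3, 2, 1] \<and> contains N w [2, 3, 1]
       \<or> contains N w [3, 2, 1] \<and> contains N v [2, 3, 1]"
proof -
  have vp: "v permutes {1..N}" and wp: "w permutes {1..N}"
    and same: "\<forall>j\<in>{1..N}. suffix_min N v j = suffix_min N w j"
    using v w by (auto simp: suffix_min_class_def perms_def)
  obtain q where q: "q \<in> {1..N}" "v q \<noteq> w q" "\<forall>k\<in>{q<..N}. v k = w k"
    using last_difference[OF vp wp \<open>v \<noteq> w\<close>] by blast
  show ?thesis
  proof (cases "v q < w q")
    case True
    then show ?thesis using patterns_at_last_difference[OF vp wp same q(1) _ q(3)] by blast
  next
    case False
    then have "w q < v q" using q(2) by simp
    then show ?thesis using patterns_at_last_difference[OF wp vp _ q(1)] same q(3) by simp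
  qed
qed

lemma transpose_mem_suffix_min_class:
  assumes "w \<in> perms N" "1 \<le> a" "a < b" "b < c" "c \<le> N" "w c < w a" "w c < w b"
  shows "w \<circ> Transposition.transpose a b \<in> suffix_min_class N w"
  using assms unfolding suffix_min_class_def perms_def
  by (auto intro!: permutes_compose permutes_swap_id suffix_min_comp_transpose)

lemma min_len_avoids_321:
  assumes "w \<in> perms N" and "\<forall>v\<in>suffix_min_class N w. len N w \<le> len N v"
  shows "avoids N w [3, 2, 1]"
  unfolding avoids_def
proof
  assume "contains N w [3, 2, 1]"
  then obtain a b c where abc: "1 \<le> a" "a < b" "b < c" "c \<le> N" "w c < w b" "w b < w a"
    unfolding contains_321_iff by blast
  let ?v = "w \<circ> Transposition.transpose a b"
  have "len N w \<le> len N ?v"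
    using assms transpose_mem_suffix_min_class[OF assms(1) abc(1-4)] abc(5,6) by auto
  moreover have "len N ?v < len N w"
    using abc by (intro len_comp_transpose_less) auto
  ultimately show False by simp
qed

lemma max_len_avoids_231:
  assumes "w \<in> perms N" and "\<forall>v\<in>suffix_min_class N w. len N v \<le> len N w"
  shows "avoids N w [2, 3, 1]"
  unfolding avoids_def
proof
  assume "contains N w [2, 3, 1]"
  then obtain a b c where abc: "1 \<le> a" "a < b" "b < c" "c \<le> N" "w c < w a" "w a < w b"
    unfolding contains_231_iff by blast
  txt \<open>\<open>?v\<close> has an inversion at \<open>(a, b)\<close>, and removing it gives back \<open>w\<close>.\<close>
  let ?v = "w \<circ> Transposition.transpose a b"
  have "len N ?v \<le> len N w"
    using assms transpose_mem_suffix_min_class[OF assms(1) abc(1-4)] abc(5,6) by auto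
  moreover have "len N (?v \<circ> Transposition.transpose a b) < len N ?v"
    using abc by (intro len_comp_transpose_less) auto
  ultimately show False by (simp add: comp_assoc)
qed

theorem suffix_min_class_321_avoiding:
  assumes "w0 \<in> perms N"
  defines "C \<equiv> suffix_min_class N w0"
  shows "(\<exists>!w. w \<in> C \<and> avoids N w [3, 2, 1])
    \<and> (\<forall>w\<in>C. avoids N w [3, 2, 1] \<longrightarrow> (\<forall>v\<in>C. len N w \<le> len N v))"
proof -
  have "finite (len N ` C)" "w0 \<in> C"
    using assms by (simp_all add: finite_suffix_min_class suffix_min_class_self)
  then obtain w where w: "w \<in> C" "len N w = Min (len N ` C)"
    by (metis Min_in empty_iff imageE image_eqI)
  then have min: "\<forall>v\<in>C. len N w \<le> len N v"
    using \<open>finite (len N ` C)\<close> by simp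
  have class_w: "suffix_min_class N w = C" and "w \<in> perms N"
    using w(1) by (simp_all add: C_def suffix_min_class_eq suffix_min_class_def)
  then have "avoids N w [3, 2, 1]"
    using min by (intro min_len_avoids_321) simp_all
  moreover have "v = w" if "v \<in> C" "avoids N v [3, 2, 1]" for v
    using suffix_min_class_patterns[OF \<open>w \<in> perms N\<close>, of v] that calculation class_w
    unfolding avoids_def by blast
  ultimately show ?thesis
    using w(1) min by blast
qed

theorem suffix_min_class_231_avoiding:
  assumes "w0 \<in> perms N"
  defines "C \<equiv> suffix_min_class N w0"
  shows "(\<exists>!w. w \<in> C \<and> avoids N w [2, 3, 1])
    \<and> (\<forall>w\<in>C. avoids N w [2, 3, 1] \<longrightarrow> (\<forall>v\<in>C. len N v \<le> len N w))"
proof -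
  have "finite (len N ` C)" "w0 \<in> C"
    using assms by (simp_all add: finite_suffix_min_class suffix_min_class_self)
  then obtain w where w: "w \<in> C" "len N w = Max (len N ` C)"
    by (metis Max_in empty_iff imageE image_eqI)
  then have max: "\<forall>v\<in>C. len N v \<le> len N w"
    using \<open>finite (len N ` C)\<close> by simp
  have class_w: "suffix_min_class N w = C" and "w \<in> perms N"
    using w(1) by (simp_all add: C_def suffix_min_class_eq suffix_min_class_def)
  then have "avoids N w [2, 3, 1]"
    using max by (intro max_len_avoids_231) simp_all
  moreover have "v = w" if "v \<in> C" "avoids N v [2, 3, 1]" for v
    using suffix_min_class_patterns[OF \<open>w \<in> perms N\<close>, of v] that calculation class_w
    unfolding avoids_def by blast
  ultimately show ?thesis
    using w(1) max by blast
qed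

theorem mainTheorem1:
  fixes N :: nat and m :: "nat list set"
  assumes "N \<ge> 1" and "m \<in> monoidM N" and "fiber N m \<noteq> {}"
  shows "(\<exists>!w. w \<in> fiber N m \<and> avoids N w [3,2,1])
       \<and> (\<forall>w \<in> fiber N m. avoids N w [3,2,1] \<longrightarrow> (\<forall>v \<in> fiber N m. len N w \<le> len N v))
       \<and> (\<exists>!w. w \<in> fiber N m \<and> avoids N w [2,3,1])
       \<and> (\<forall>w \<in> fiber N m. avoids N w [2,3,1] \<longrightarrow> (\<forall>v \<in> fiber N m. len N v \<le> len N w))"
proof -
  obtain w0 where w0: "w0 \<in> fiber N m"
    using assms(3) by blast
  then have "w0 \<in> perms N"
    by (simp add: fiber_def)
  moreover have "fiber N m = suffix_min_class N w0"
    using assms(2) w0 by (rule fiber_eq_suffix_min_class)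
  ultimately show ?thesis
    using suffix_min_class_321_avoiding suffix_min_class_231_avoiding by simp
qed

end
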